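(* Let $R$ be a valuation ring with maximal ideal $P$, let $E$ be an injective $R$-module and let $r\in P$. Then $E/rE$ is an injective $R/rR$-module.
   Context: All rings are commutative with identity. A valuation ring is a ring whose ideals are totally ordered by inclusion; $P$ denotes its unique maximal ideal. *)

theory Defs
  imports "HOL-Algebra.Module" "HOL-Algebra.QuotRing"
begin

definition valuation_ring :: "('a, 'm) ring_scheme \<Rightarrow> bool" where
  "valuation_ring R \<longleftrightarrow> cring R \<and>
     (\<forall>I J. ideal I R \<and> ideal J R \<longrightarrow> I \<subseteq> J \<or> J \<subseteq> I)"

definition lin_on ::
  "('a, 'm) ring_scheme \<Rightarrow> ('a, 'b, 'n) module_scheme \<Rightarrow> 'b set
     \<Rightarrow> ('a, 'c, 'k) module_scheme \<Rightarrow> ('b \<Rightarrow> 'c) \<Rightarrow> bool" where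
  "lin_on R M S N f \<longleftrightarrow>
     (\<forall>x\<in>S. f x \<in> carrier N) \<and>
     (\<forall>x\<in>S. \<forall>y\<in>S. f (x \<oplus>\<^bsub>M\<^esub> y) = f x \<oplus>\<^bsub>N\<^esub> f y) \<and>
     (\<forall>a\<in>carrier R. \<forall>x\<in>S. f (a \<odot>\<^bsub>M\<^esub> x) = a \<odot>\<^bsub>N\<^esub> f x)"

text \<open>Since HOL cannot quantify over types inside a
  formula, the test modules M range over modules whose carrier lives in the type 'c,
  given as a parameter.\<close>
definition injective_module ::
  "('a, 'm) ring_scheme \<Rightarrow> ('a, 'b, 'n) module_scheme \<Rightarrow> 'c itself \<Rightarrow> bool" where
  "injective_module R E (T :: 'c itself) \<longleftrightarrow> module R E \<and>
     (\<forall>(M :: ('a, 'c) module) S f. module R M \<and> submodule S R M \<and> lin_on R M S E f \<longrightarrow>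
        (\<exists>g. lin_on R M (carrier M) E g \<and> (\<forall>x\<in>S. g x = f x)))"

definition smult_sub :: "('a, 'b, 'n) module_scheme \<Rightarrow> 'a \<Rightarrow> 'b set" where
  "smult_sub E r = {r \<odot>\<^bsub>E\<^esub> x | x. x \<in> carrier E}"

text \<open>The quotient M/N, viewed as a module over the quotient ring R/I (where I M \<subseteq> N).
  Elements are additive cosets x + N; the scalar (a + I) acts on (x + N) giving a x + N.
  The multiplicative fields of the module record are irrelevant for modules.\<close>
definition quot_smult :: "('a, 'b, 'n) module_scheme \<Rightarrow> 'b set \<Rightarrow> 'a set \<Rightarrow> 'b set \<Rightarrow> 'b set" where
  "quot_smult M N S T = (\<Union>a\<in>S. \<Union>x\<in>T. {a \<odot>\<^bsub>M\<^esub> x}) <+>\<^bsub>M\<^esub> N"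

definition quot_module ::
  "('a, 'm) ring_scheme \<Rightarrow> ('a, 'b, 'n) module_scheme \<Rightarrow> 'b set \<Rightarrow> ('a set, 'b set) module" where
  "quot_module R M N =
     \<lparr> carrier = a_rcosets\<^bsub>M\<^esub> N,
       mult = set_mult (add_monoid M),
       one = N,
       zero = N,
       add = (\<lambda>U V. U <+>\<^bsub>M\<^esub> V),
       smult = quot_smult M N \<rparr>"

end

theory Submission
  imports Defs
begin

(* By Baer's criterion it suffices to extend maps defined on ideals.  A linear map from an
   ideal of R/rR to E/rE lifts to a map x : J \<rightarrow> E, J \<supseteq> rR, that is linear modulo rE.
   Multiplication by c \<in> Ann(r) kills rE, and c x(a) = 0 whenever c a = 0: compare a with r,
   and then c with the relevant cofactor, in the chain of principal ideals of R.  The same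
   chain property makes the products c a (c \<in> Ann(r), a \<in> J) an ideal, on which
   c a \<mapsto> c x(a) is well defined and linear, so injectivity of E yields e with
   c x(a) = c a e.  Every a e - x(a) is thus killed by Ann(r), and in an injective module
   such an element is divisible by r (extend t r \<mapsto> t z from rR to R).  Hence
   a e \<equiv> x(a) mod rE. *)

lemma (in cring) cring_idealI:
  assumes "I \<subseteq> carrier R" "\<zero> \<in> I" "\<And>a b. a \<in> I \<Longrightarrow> b \<in> I \<Longrightarrow> a \<oplus> b \<in> I"
    "\<And>a x. a \<in> I \<Longrightarrow> x \<in> carrier R \<Longrightarrow> x \<otimes> a \<in> I"
  shows "ideal I R"
proof -
  have "\<ominus> a \<in> I" if "a \<in> I" for a
    using assms(4)[OF that, of "\<ominus> \<one>"] assms(1) that by (auto simp: l_minus)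
  then show ?thesis
    using assms m_comm by (intro idealI ring_axioms add.subgroupI) (auto, metis subsetD)
qed

lemma (in abelian_group) minus_eq_zero_iff:
  assumes "x \<in> carrier G" "y \<in> carrier G"
  shows "x \<ominus> y = \<zero> \<longleftrightarrow> x = y"
  using assms by (simp add: minus_eq add.inv_solve_right')

section \<open>Baer's criterion\<close>

definition self_module :: "('a, 'm) ring_scheme \<Rightarrow> ('a, 'a) module" where
  "self_module R = \<lparr>carrier = carrier R, mult = mult R, one = one R, zero = zero R,
     add = add R, smult = mult R\<rparr>"

lemma self_module_simps [simp]:
  "carrier (self_module R) = carrier R"
  "x \<oplus>\<^bsub>self_module R\<^esub> y = x \<oplus>\<^bsub>R\<^esub> y"
  "\<zero>\<^bsub>self_module R\<^esub> = \<zero>\<^bsub>R\<^esub>"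
  "\<ominus>\<^bsub>self_module R\<^esub> x = \<ominus>\<^bsub>R\<^esub> x"
  "a \<odot>\<^bsub>self_module R\<^esub> x = a \<otimes>\<^bsub>R\<^esub> x"
  by (simp_all add: self_module_def a_inv_def m_inv_def)

lemma (in cring) module_self_module: "module R (self_module R)"
proof -
  have "abelian_group (self_module R)"
    by (rule abelian_groupI) (auto simp: self_module_def a_ac intro: a_assoc l_neg)
  then show ?thesis
    by (rule moduleI[OF is_cring]) (auto simp: self_module_def m_assoc l_distr r_distr)
qed

lemma (in cring) submodule_self_module:
  assumes "ideal K R"
  shows "submodule K R (self_module R)"
proof -
  interpret K: ideal K R by fact
  interpret module R "self_module R" by (rule module_self_module)
  show ?thesis
    by (rule submoduleI) (auto simp: K.a_subset K.I_l_closed)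
qed

definition baer_injective :: "('a, 'm) ring_scheme \<Rightarrow> ('a, 'b, 'n) module_scheme \<Rightarrow> bool" where
  "baer_injective R E \<longleftrightarrow> (\<forall>K \<psi>. ideal K R \<and> lin_on R (self_module R) K E \<psi> \<longrightarrow>
     (\<exists>e\<in>carrier E. \<forall>k\<in>K. \<psi> k = k \<odot>\<^bsub>E\<^esub> e))"

(* Partial linear maps are represented by their graphs, so that a chain of them is bounded
   by its union. *)
definition lin_graph ::
  "('a, 'm) ring_scheme \<Rightarrow> ('a, 'b, 'n) module_scheme \<Rightarrow> ('a, 'c, 'k) module_scheme
     \<Rightarrow> ('b \<times> 'c) set \<Rightarrow> bool" where
  "lin_graph R M N G \<longleftrightarrow> G \<subseteq> carrier M \<times> carrier N \<and> single_valued G \<and>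
     (\<forall>x y x' y'. (x, y) \<in> G \<longrightarrow> (x', y') \<in> G \<longrightarrow> (x \<oplus>\<^bsub>M\<^esub> x', y \<oplus>\<^bsub>N\<^esub> y') \<in> G) \<and>
     (\<forall>a x y. a \<in> carrier R \<longrightarrow> (x, y) \<in> G \<longrightarrow> (a \<odot>\<^bsub>M\<^esub> x, a \<odot>\<^bsub>N\<^esub> y) \<in> G)"

lemma
  assumes "lin_graph R M N G"
  shows lin_graph_subset: "G \<subseteq> carrier M \<times> carrier N"
    and lin_graph_single_valued: "single_valued G"
    and lin_graph_add: "(x, y) \<in> G \<Longrightarrow> (x', y') \<in> G \<Longrightarrow> (x \<oplus>\<^bsub>M\<^esub> x', y \<oplus>\<^bsub>N\<^esub> y') \<in> G"
    and lin_graph_smult: "a \<in> carrier R \<Longrightarrow> (x, y) \<in> G \<Longrightarrow> (a \<odot>\<^bsub>M\<^esub> x, a \<odot>\<^bsub>N\<^esub> y) \<in> G"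
  using assms unfolding lin_graph_def by blast+

lemma lin_graph_zero:
  assumes "module R M" "module R N" "lin_graph R M N G" "G \<noteq> {}"
  shows "(\<zero>\<^bsub>M\<^esub>, \<zero>\<^bsub>N\<^esub>) \<in> G"
proof -
  interpret M: module R M by fact
  interpret N: module R N by fact
  obtain x y where xy: "(x, y) \<in> G" using assms(4) by auto
  then have "(\<zero>\<^bsub>R\<^esub> \<odot>\<^bsub>M\<^esub> x, \<zero>\<^bsub>R\<^esub> \<odot>\<^bsub>N\<^esub> y) \<in> G"
    using lin_graph_smult[OF assms(3)] by simp
  then show ?thesis
    using xy lin_graph_subset[OF assms(3)] by auto
qed

lemma lin_graphI:
  fixes R (structure)
  assumes "module R M" "module R N" and sub: "G \<subseteq> carrier M \<times> carrier N"
    and add: "\<And>x y x' y'. (x, y) \<in> G \<Longrightarrow> (x', y') \<in> G \<Longrightarrow> (x \<oplus>\<^bsub>M\<^esub> x', y \<oplus>\<^bsub>N\<^esub> y') \<in> G"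
    and smult: "\<And>a x y. a \<in> carrier R \<Longrightarrow> (x, y) \<in> G \<Longrightarrow> (a \<odot>\<^bsub>M\<^esub> x, a \<odot>\<^bsub>N\<^esub> y) \<in> G"
    and kernel: "\<And>y. (\<zero>\<^bsub>M\<^esub>, y) \<in> G \<Longrightarrow> y = \<zero>\<^bsub>N\<^esub>"
  shows "lin_graph R M N G"
proof -
  interpret M: module R M by fact
  interpret N: module R N by fact
  have "y = y'" if "(x, y) \<in> G" "(x, y') \<in> G" for x y y'
  proof -
    have c: "x \<in> carrier M" "y \<in> carrier N" "y' \<in> carrier N" using that sub by auto
    have "((\<ominus> \<one>) \<odot>\<^bsub>M\<^esub> x \<oplus>\<^bsub>M\<^esub> x, (\<ominus> \<one>) \<odot>\<^bsub>N\<^esub> y' \<oplus>\<^bsub>N\<^esub> y) \<in> G"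
      using add[OF smult[OF _ that(2)] that(1)] by simp
    then have "\<ominus>\<^bsub>N\<^esub> y' \<oplus>\<^bsub>N\<^esub> y = \<zero>\<^bsub>N\<^esub>"
      using kernel c by (simp add: M.smult_l_minus N.smult_l_minus M.l_neg)
    then show "y = y'"
      using c by (simp add: N.add.inv_solve_left')
  qed
  then show ?thesis
    unfolding lin_graph_def single_valued_def using sub add smult by blast
qed

definition graph_fun :: "('b \<times> 'c) set \<Rightarrow> 'b \<Rightarrow> 'c" where
  "graph_fun G x = (THE y. (x, y) \<in> G)"

lemma graph_fun_eq: "single_valued G \<Longrightarrow> (x, y) \<in> G \<Longrightarrow> graph_fun G x = y"
  unfolding graph_fun_def single_valued_def by blast

lemma graph_fun_in_graph: "single_valued G \<Longrightarrow> x \<in> Domain G \<Longrightarrow> (x, graph_fun G x) \<in> G"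
  using graph_fun_eq by fastforce

lemma lin_on_graph_fun:
  assumes "lin_graph R M N G"
  shows "lin_on R M (Domain G) N (graph_fun G)"
proof -
  note sv = lin_graph_single_valued[OF assms]
  note in_G = graph_fun_in_graph[OF sv]
  show ?thesis
    unfolding lin_on_def
  proof (intro conjI ballI)
    fix x assume "x \<in> Domain G"
    then show "graph_fun G x \<in> carrier N"
      using in_G lin_graph_subset[OF assms] by blast
  next
    fix x y assume "x \<in> Domain G" "y \<in> Domain G"
    then show "graph_fun G (x \<oplus>\<^bsub>M\<^esub> y) = graph_fun G x \<oplus>\<^bsub>N\<^esub> graph_fun G y"
      using graph_fun_eq[OF sv lin_graph_add[OF assms in_G in_G]] by blast
  next
    fix a x assume "a \<in> carrier R" "x \<in> Domain G"
    then show "graph_fun G (a \<odot>\<^bsub>M\<^esub> x) = a \<odot>\<^bsub>N\<^esub> graph_fun G x"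
      using graph_fun_eq[OF sv lin_graph_smult[OF assms _ in_G]] by blast
  qed
qed

lemma lin_graph_image:
  assumes "submodule S R M" "lin_on R M S N f"
  shows "lin_graph R M N ((\<lambda>x. (x, f x)) ` S)"
proof -
  interpret S: submodule S R M by fact
  have "(x \<oplus>\<^bsub>M\<^esub> y, f x \<oplus>\<^bsub>N\<^esub> f y) \<in> (\<lambda>x. (x, f x)) ` S" if "x \<in> S" "y \<in> S" for x y
    using assms(2) that S.m_closed[of x y] unfolding lin_on_def
    by (intro rev_image_eqI[of "x \<oplus>\<^bsub>M\<^esub> y"]) auto
  moreover have "(a \<odot>\<^bsub>M\<^esub> x, a \<odot>\<^bsub>N\<^esub> f x) \<in> (\<lambda>x. (x, f x)) ` S"
    if "a \<in> carrier R" "x \<in> S" for a x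
    using assms(2) that unfolding lin_on_def by (intro rev_image_eqI[of "a \<odot>\<^bsub>M\<^esub> x"]) auto
  ultimately show ?thesis
    using S.subset assms(2) unfolding lin_graph_def lin_on_def single_valued_def by auto
qed

lemma lin_graph_Union:
  assumes lin: "\<And>G. G \<in> C \<Longrightarrow> lin_graph R M N G"
    and chain: "\<And>G G'. G \<in> C \<Longrightarrow> G' \<in> C \<Longrightarrow> G \<subseteq> G' \<or> G' \<subseteq> G"
  shows "lin_graph R M N (\<Union>C)"
proof -
  have common: "\<exists>G\<in>C. p \<in> G \<and> q \<in> G" if "p \<in> \<Union>C" "q \<in> \<Union>C" for p q
    using that chain by blast
  show ?thesis
    unfolding lin_graph_def single_valued_def
  proof (intro conjI allI impI)
    show "\<Union>C \<subseteq> carrier M \<times> carrier N"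
      using lin lin_graph_subset by blast
  next
    fix x y y' assume "(x, y) \<in> \<Union>C" "(x, y') \<in> \<Union>C"
    then obtain G where "G \<in> C" "(x, y) \<in> G" "(x, y') \<in> G" using common by blast
    then show "y = y'"
      using lin_graph_single_valued[OF lin] by (auto dest: single_valuedD)
  next
    fix x y x' y' assume "(x, y) \<in> \<Union>C" "(x', y') \<in> \<Union>C"
    then obtain G where "G \<in> C" "(x, y) \<in> G" "(x', y') \<in> G" using common by blast
    then show "(x \<oplus>\<^bsub>M\<^esub> x', y \<oplus>\<^bsub>N\<^esub> y') \<in> \<Union>C"
      using lin_graph_add[OF lin] by blast
  next
    fix a x y assume "a \<in> carrier R" "(x, y) \<in> \<Union>C"
    then show "(a \<odot>\<^bsub>M\<^esub> x, a \<odot>\<^bsub>N\<^esub> y) \<in> \<Union>C"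
      using lin_graph_smult[OF lin] by blast
  qed
qed

lemma ideal_Domain_lin_graph:
  fixes R (structure)
  assumes "cring R" "module R E" "lin_graph R (self_module R) E G" "G \<noteq> {}"
  shows "ideal (Domain G) R"
proof -
  interpret cring R by fact
  show ?thesis
  proof (rule cring_idealI)
    show "Domain G \<subseteq> carrier R"
      using lin_graph_subset[OF assms(3)] by auto
    show "\<zero> \<in> Domain G"
      using lin_graph_zero[OF module_self_module assms(2-4)] by auto
  next
    fix a b assume "a \<in> Domain G" "b \<in> Domain G"
    then show "a \<oplus> b \<in> Domain G"
      using lin_graph_add[OF assms(3)] by fastforce
  next
    fix a x assume "a \<in> Domain G" "x \<in> carrier R"
    then show "x \<otimes> a \<in> Domain G"
      using lin_graph_smult[OF assms(3)] by fastforce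
  qed
qed

lemma baer_injective_graph:
  fixes R (structure)
  assumes E: "module R E" "baer_injective R E"
    and G: "lin_graph R (self_module R) E G" "G \<noteq> {}"
  shows "\<exists>e\<in>carrier E. \<forall>k y. (k, y) \<in> G \<longrightarrow> y = k \<odot>\<^bsub>E\<^esub> e"
proof -
  have "ideal (Domain G) R"
    using ideal_Domain_lin_graph[OF module.axioms(1)[OF E(1)] E(1) G] .
  moreover have "lin_on R (self_module R) (Domain G) E (graph_fun G)"
    using lin_on_graph_fun[OF G(1)] by simp
  ultimately obtain e where "e \<in> carrier E" "\<forall>k\<in>Domain G. graph_fun G k = k \<odot>\<^bsub>E\<^esub> e"
    using E(2) unfolding baer_injective_def by blast
  then show ?thesis
    using graph_fun_eq[OF lin_graph_single_valued[OF G(1)]] by (metis Domain.DomainI)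
qed

lemma lin_graph_adjoin:
  fixes R (structure)
  assumes M: "module R M" and N: "module R N" and G: "lin_graph R M N G" "G \<noteq> {}"
    and m: "m \<in> carrier M" and e: "e \<in> carrier N"
    and compatible: "\<And>a y. a \<in> carrier R \<Longrightarrow> (a \<odot>\<^bsub>M\<^esub> m, y) \<in> G \<Longrightarrow> y = a \<odot>\<^bsub>N\<^esub> e"
  defines "G' \<equiv> {(x \<oplus>\<^bsub>M\<^esub> a \<odot>\<^bsub>M\<^esub> m, y \<oplus>\<^bsub>N\<^esub> a \<odot>\<^bsub>N\<^esub> e) | x y a. (x, y) \<in> G \<and> a \<in> carrier R}"
  shows "lin_graph R M N G'" and "G \<subseteq> G'" and "(m, e) \<in> G'"
proof -
  interpret M: module R M by fact
  interpret N: module R N by fact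
  have carr: "x \<in> carrier M" "y \<in> carrier N" if "(x, y) \<in> G" for x y
    using that lin_graph_subset[OF G(1)] by auto
  have zero: "(\<zero>\<^bsub>M\<^esub>, \<zero>\<^bsub>N\<^esub>) \<in> G"
    using lin_graph_zero[OF M N G] .
  show "lin_graph R M N G'"
  proof (rule lin_graphI[OF M N])
    show "G' \<subseteq> carrier M \<times> carrier N"
      using carr m e by (auto simp: G'_def)
  next
    fix x y x' y' assume "(x, y) \<in> G'" "(x', y') \<in> G'"
    then obtain x1 y1 a1 x2 y2 a2 where
      "(x1, y1) \<in> G" "a1 \<in> carrier R" "x = x1 \<oplus>\<^bsub>M\<^esub> a1 \<odot>\<^bsub>M\<^esub> m" "y = y1 \<oplus>\<^bsub>N\<^esub> a1 \<odot>\<^bsub>N\<^esub> e"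
      "(x2, y2) \<in> G" "a2 \<in> carrier R" "x' = x2 \<oplus>\<^bsub>M\<^esub> a2 \<odot>\<^bsub>M\<^esub> m" "y' = y2 \<oplus>\<^bsub>N\<^esub> a2 \<odot>\<^bsub>N\<^esub> e"
      unfolding G'_def by blast
    moreover from this have
      "x \<oplus>\<^bsub>M\<^esub> x' = (x1 \<oplus>\<^bsub>M\<^esub> x2) \<oplus>\<^bsub>M\<^esub> (a1 \<oplus> a2) \<odot>\<^bsub>M\<^esub> m"
      "y \<oplus>\<^bsub>N\<^esub> y' = (y1 \<oplus>\<^bsub>N\<^esub> y2) \<oplus>\<^bsub>N\<^esub> (a1 \<oplus> a2) \<odot>\<^bsub>N\<^esub> e"
      using carr m e by (simp_all add: M.smult_l_distr N.smult_l_distr M.a_ac N.a_ac)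
    ultimately show "(x \<oplus>\<^bsub>M\<^esub> x', y \<oplus>\<^bsub>N\<^esub> y') \<in> G'"
      unfolding G'_def using lin_graph_add[OF G(1)] by blast
  next
    fix c x y assume c: "c \<in> carrier R" and "(x, y) \<in> G'"
    then obtain x1 y1 a1 where
      "(x1, y1) \<in> G" "a1 \<in> carrier R" "x = x1 \<oplus>\<^bsub>M\<^esub> a1 \<odot>\<^bsub>M\<^esub> m" "y = y1 \<oplus>\<^bsub>N\<^esub> a1 \<odot>\<^bsub>N\<^esub> e"
      unfolding G'_def by blast
    moreover from this have
      "c \<odot>\<^bsub>M\<^esub> x = c \<odot>\<^bsub>M\<^esub> x1 \<oplus>\<^bsub>M\<^esub> (c \<otimes> a1) \<odot>\<^bsub>M\<^esub> m"
      "c \<odot>\<^bsub>N\<^esub> y = c \<odot>\<^bsub>N\<^esub> y1 \<oplus>\<^bsub>N\<^esub> (c \<otimes> a1) \<odot>\<^bsub>N\<^esub> e"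
      using carr m e c by (simp_all add: M.smult_r_distr N.smult_r_distr M.smult_assoc1 N.smult_assoc1)
    ultimately show "(c \<odot>\<^bsub>M\<^esub> x, c \<odot>\<^bsub>N\<^esub> y) \<in> G'"
      unfolding G'_def using lin_graph_smult[OF G(1)] c by blast
  next
    fix y assume "(\<zero>\<^bsub>M\<^esub>, y) \<in> G'"
    then obtain x1 y1 a where xy: "(x1, y1) \<in> G" and a: "a \<in> carrier R"
      and "\<zero>\<^bsub>M\<^esub> = x1 \<oplus>\<^bsub>M\<^esub> a \<odot>\<^bsub>M\<^esub> m" "y = y1 \<oplus>\<^bsub>N\<^esub> a \<odot>\<^bsub>N\<^esub> e"
      unfolding G'_def by blast
    moreover from this have "x1 = (\<ominus> a) \<odot>\<^bsub>M\<^esub> m"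
      using carr m by (metis M.add.inv_equality M.smult_closed M.smult_l_minus M.a_comm)
    then have "y1 = (\<ominus> a) \<odot>\<^bsub>N\<^esub> e"
      using compatible xy a by simp
    ultimately show "y = \<zero>\<^bsub>N\<^esub>"
      using a e by (simp add: N.smult_l_minus N.l_neg)
  qed
  have "(x, y) = (x \<oplus>\<^bsub>M\<^esub> \<zero> \<odot>\<^bsub>M\<^esub> m, y \<oplus>\<^bsub>N\<^esub> \<zero> \<odot>\<^bsub>N\<^esub> e)" if "(x, y) \<in> G" for x y
    using carr[OF that] m e by simp
  then show "G \<subseteq> G'"
    unfolding G'_def by fastforce
  have "(m, e) = (\<zero>\<^bsub>M\<^esub> \<oplus>\<^bsub>M\<^esub> \<one> \<odot>\<^bsub>M\<^esub> m, \<zero>\<^bsub>N\<^esub> \<oplus>\<^bsub>N\<^esub> \<one> \<odot>\<^bsub>N\<^esub> e)"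
    using m e by simp
  then show "(m, e) \<in> G'"
    unfolding G'_def using zero by blast
qed

lemma lin_graph_extend:
  fixes R (structure)
  assumes M: "module R M" and E: "module R E" "baer_injective R E"
    and G: "lin_graph R M E G" "G \<noteq> {}" and m: "m \<in> carrier M"
  shows "\<exists>G'. lin_graph R M E G' \<and> G \<subseteq> G' \<and> m \<in> Domain G'"
proof -
  interpret M: module R M by fact
  interpret E: module R E by fact
  define Gm where "Gm = {(a, y). a \<in> carrier R \<and> (a \<odot>\<^bsub>M\<^esub> m, y) \<in> G}"
  have "lin_graph R (self_module R) E Gm"
    unfolding lin_graph_def single_valued_def Gm_def
    using lin_graph_subset[OF G(1)] lin_graph_single_valued[OF G(1)] m
      lin_graph_add[OF G(1)] lin_graph_smult[OF G(1)]
    by (auto simp: M.smult_l_distr M.smult_assoc1 dest: single_valuedD)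
  moreover have "(\<zero>, \<zero>\<^bsub>E\<^esub>) \<in> Gm"
    using lin_graph_zero[OF M E(1) G] m by (simp add: Gm_def)
  ultimately obtain e where e: "e \<in> carrier E" and "\<forall>a y. (a, y) \<in> Gm \<longrightarrow> y = a \<odot>\<^bsub>E\<^esub> e"
    using baer_injective_graph[OF E] by blast
  then have "\<And>a y. a \<in> carrier R \<Longrightarrow> (a \<odot>\<^bsub>M\<^esub> m, y) \<in> G \<Longrightarrow> y = a \<odot>\<^bsub>E\<^esub> e"
    by (simp add: Gm_def)
  from lin_graph_adjoin[OF M E(1) G m e this] show ?thesis
    by (intro exI conjI) (auto intro: Domain.DomainI)
qed

theorem baer_injective_extends:
  fixes R (structure)
  assumes E: "module R E" "baer_injective R E" and M: "module R M"
    and S: "submodule S R M" and f: "lin_on R M S E f"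
  shows "\<exists>g. lin_on R M (carrier M) E g \<and> (\<forall>x\<in>S. g x = f x)"
proof -
  define \<G> where "\<G> = {G. lin_graph R M E G \<and> (\<lambda>x. (x, f x)) ` S \<subseteq> G}"
  have "S \<noteq> {}"
    using submodule.axioms(1)[OF S] subgroup.one_closed by fastforce
  have "\<exists>G\<in>\<G>. \<forall>G'\<in>\<G>. G \<subseteq> G' \<longrightarrow> G' = G"
  proof (rule subset_Zorn_nonempty)
    show "\<G> \<noteq> {}"
      using lin_graph_image[OF S f] by (auto simp: \<G>_def)
  next
    fix \<C> assume "\<C> \<noteq> {}" "subset.chain \<G> \<C>"
    then show "\<Union>\<C> \<in> \<G>"
      using lin_graph_Union[of \<C> R M E] unfolding \<G>_def pred_on.chain_def by blast
  qed
  then obtain G where "G \<in> \<G>" and max: "\<And>G'. G' \<in> \<G> \<Longrightarrow> G \<subseteq> G' \<Longrightarrow> G' = G"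
    by blast
  then have G: "lin_graph R M E G" "(\<lambda>x. (x, f x)) ` S \<subseteq> G"
    by (auto simp: \<G>_def)
  have "Domain G = carrier M"
  proof
    show "Domain G \<subseteq> carrier M"
      using lin_graph_subset[OF G(1)] by auto
  next
    show "carrier M \<subseteq> Domain G"
    proof
      fix m assume "m \<in> carrier M"
      then obtain G' where "lin_graph R M E G'" "G \<subseteq> G'" "m \<in> Domain G'"
        using lin_graph_extend[OF M E G(1)] G(2) \<open>S \<noteq> {}\<close> by blast
      then show "m \<in> Domain G"
        using max[of G'] G(2) by (auto simp: \<G>_def)
    qed
  qed
  then show ?thesis
    using lin_on_graph_fun[OF G(1)] graph_fun_eq[OF lin_graph_single_valued[OF G(1)]] G(2)
    by (metis image_subset_iff)
qed

lemma baer_injective_imp_injective_module: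
  assumes "module R E" "baer_injective R E"
  shows "injective_module R E T"
  unfolding injective_module_def using assms baer_injective_extends by blast

lemma injective_module_imp_baer_injective:
  fixes R :: "('a, 'm) ring_scheme" (structure)
  assumes "injective_module R E TYPE('a)"
  shows "baer_injective R E"
  unfolding baer_injective_def
proof (intro allI impI, elim conjE)
  fix K \<psi> assume K: "ideal K R" and \<psi>: "lin_on R (self_module R) K E \<psi>"
  have E: "module R E"
    using assms by (simp add: injective_module_def)
  then interpret cring R by (rule module.axioms(1))
  obtain g where g: "lin_on R (self_module R) (carrier R) E g" and "\<forall>k\<in>K. g k = \<psi> k"
    using assms module_self_module submodule_self_module[OF K] \<psi>
    unfolding injective_module_def by fastforce
  moreover have "g k = k \<odot>\<^bsub>E\<^esub> g \<one>" if "k \<in> carrier R" for k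
    using g that unfolding lin_on_def by (metis one_closed r_one self_module_simps(1,5))
  ultimately show "\<exists>e\<in>carrier E. \<forall>k\<in>K. \<psi> k = k \<odot>\<^bsub>E\<^esub> e"
    using g ideal.Icarr[OF K] unfolding lin_on_def by (metis one_closed self_module_simps(1))
qed

section \<open>Quotient modules\<close>

lemma lin_on_zero:
  assumes "module R M" "module R N" "lin_on R M S N f" "\<zero>\<^bsub>M\<^esub> \<in> S"
  shows "f \<zero>\<^bsub>M\<^esub> = \<zero>\<^bsub>N\<^esub>"
proof -
  interpret M: module R M by fact
  interpret N: module R N by fact
  have "f (\<zero>\<^bsub>R\<^esub> \<odot>\<^bsub>M\<^esub> \<zero>\<^bsub>M\<^esub>) = \<zero>\<^bsub>R\<^esub> \<odot>\<^bsub>N\<^esub> f \<zero>\<^bsub>M\<^esub>"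
    using assms(3,4) unfolding lin_on_def by blast
  then show ?thesis
    using assms(3,4) unfolding lin_on_def by simp
qed

lemma a_rcosetsE:
  fixes G (structure)
  assumes "X \<in> a_rcosets H"
  obtains x where "x \<in> carrier G" "X = H +> x"
  using assms by (auto simp: A_RCOSETS_def')

lemma (in abelian_subgroup) a_rcos_eq_iff:
  assumes "x \<in> carrier G" "y \<in> carrier G"
  shows "H +> x = H +> y \<longleftrightarrow> x \<ominus> y \<in> H"
  using assms a_rcos_module[of y x] a_rcos_self[of x] a_repr_independence'[of x y]
  by (auto simp: minus_eq)

lemma (in abelian_subgroup) set_add_eq_a_rcos:
  assumes "S \<subseteq> H +> z" "z \<in> S" "z \<in> carrier G"
  shows "S <+>\<^bsub>G\<^esub> H = H +> z"
proof
  show "S <+>\<^bsub>G\<^esub> H \<subseteq> H +> z"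
  proof
    fix w assume "w \<in> S <+>\<^bsub>G\<^esub> H"
    then obtain s h where "s \<in> S" "h \<in> H" "w = s \<oplus> h"
      by (auto simp: set_add_def')
    moreover from this obtain h' where "h' \<in> H" "s = h' \<oplus> z"
      using assms(1) by (auto simp: a_r_coset_def')
    ultimately have "w = (h' \<oplus> h) \<oplus> z" "h' \<oplus> h \<in> H"
      using assms(3) a_subset by (auto simp: a_ac)
    then show "w \<in> H +> z"
      by (auto simp: a_r_coset_def')
  qed
  show "H +> z \<subseteq> S <+>\<^bsub>G\<^esub> H"
    using assms(2,3) a_subset by (auto simp: set_add_def' a_r_coset_def' a_comm)
qed

lemma quot_module_simps [simp]:
  "carrier (quot_module R E N) = a_rcosets\<^bsub>E\<^esub> N"
  "X \<oplus>\<^bsub>quot_module R E N\<^esub> Y = X <+>\<^bsub>E\<^esub> Y"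
  "\<zero>\<^bsub>quot_module R E N\<^esub> = N"
  "A \<odot>\<^bsub>quot_module R E N\<^esub> X = quot_smult E N A X"
  by (simp_all add: quot_module_def)

lemma abelian_group_quot_module:
  fixes E :: "('a, 'b, 'n) module_scheme"
  assumes "abelian_subgroup N E"
  shows "abelian_group (quot_module R E N)"
proof -
  interpret abelian_subgroup N E by fact
  show ?thesis
  proof (rule abelian_groupI, simp_all only: quot_module_simps)
    fix X Y assume "X \<in> a_rcosets\<^bsub>E\<^esub> N" "Y \<in> a_rcosets\<^bsub>E\<^esub> N"
    then show "X <+>\<^bsub>E\<^esub> Y \<in> a_rcosets\<^bsub>E\<^esub> N"
      by (rule a_setmult_closed)
    obtain x y where "x \<in> carrier E" "y \<in> carrier E" "X = N +>\<^bsub>E\<^esub> x" "Y = N +>\<^bsub>E\<^esub> y"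
      using \<open>X \<in> _\<close> \<open>Y \<in> _\<close> by (metis a_rcosetsE)
    then show "X <+>\<^bsub>E\<^esub> Y = Y <+>\<^bsub>E\<^esub> X"
      by (simp add: a_rcos_sum a_comm)
  next
    show "N \<in> a_rcosets\<^bsub>E\<^esub> N"
      by (rule a_subgroup_in_rcosets)
  next
    fix X Y Z assume "X \<in> a_rcosets\<^bsub>E\<^esub> N" "Y \<in> a_rcosets\<^bsub>E\<^esub> N" "Z \<in> a_rcosets\<^bsub>E\<^esub> N"
    then show "X <+>\<^bsub>E\<^esub> Y <+>\<^bsub>E\<^esub> Z = X <+>\<^bsub>E\<^esub> (Y <+>\<^bsub>E\<^esub> Z)"
      by (rule a_rcosets_assoc)
  next
    fix X assume "X \<in> a_rcosets\<^bsub>E\<^esub> N"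
    then show "N <+>\<^bsub>E\<^esub> X = X"
      by (rule rcosets_add_eq)
    show "\<exists>Y\<in>a_rcosets\<^bsub>E\<^esub> N. Y <+>\<^bsub>E\<^esub> X = N"
      using \<open>X \<in> _\<close> a_setinv_closed a_rcosets_inv_mult_group_eq by blast
  qed
qed

locale module_quotient = module R E + I: ideal I R
  for R :: "('a, 'm) ring_scheme" (structure) and E :: "('a, 'b, 'n) module_scheme" and I N +
  assumes submodule: "submodule N R E"
    and ideal_smult_closed: "\<lbrakk>i \<in> I; x \<in> carrier E\<rbrakk> \<Longrightarrow> i \<odot>\<^bsub>E\<^esub> x \<in> N"

sublocale module_quotient \<subseteq> N: abelian_subgroup N E
proof (rule abelian_subgroupI3)
  show "additive_subgroup N E"
    using submodule.axioms(1)[OF submodule] by (rule additive_subgroup.intro)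
  show "abelian_group E"
    by unfold_locales
qed

context module_quotient
begin

lemma quot_smult_rcos:
  assumes a: "a \<in> carrier R" and x: "x \<in> carrier E"
  shows "quot_smult E N (I +> a) (N +>\<^bsub>E\<^esub> x) = N +>\<^bsub>E\<^esub> (a \<odot>\<^bsub>E\<^esub> x)"
proof -
  have "b \<odot>\<^bsub>E\<^esub> y \<in> N +>\<^bsub>E\<^esub> (a \<odot>\<^bsub>E\<^esub> x)"
    if b: "b \<in> I +> a" and y: "y \<in> N +>\<^bsub>E\<^esub> x" for b y
  proof -
    obtain i where i: "i \<in> I" "b = i \<oplus> a"
      using b unfolding a_r_coset_def' by blast
    obtain n where n: "n \<in> N" "y = n \<oplus>\<^bsub>E\<^esub> x"
      using y unfolding a_r_coset_def' by blast
    have c: "i \<in> carrier R" "n \<in> carrier E"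
      using i n I.a_subset N.a_subset by auto
    have "b \<odot>\<^bsub>E\<^esub> y = (i \<odot>\<^bsub>E\<^esub> y \<oplus>\<^bsub>E\<^esub> a \<odot>\<^bsub>E\<^esub> n) \<oplus>\<^bsub>E\<^esub> a \<odot>\<^bsub>E\<^esub> x"
      using i n c a x by (simp add: smult_l_distr smult_r_distr a_ac)
    moreover have "i \<odot>\<^bsub>E\<^esub> y \<oplus>\<^bsub>E\<^esub> a \<odot>\<^bsub>E\<^esub> n \<in> N"
      using ideal_smult_closed submodule.smult_closed[OF submodule] i n c a x by simp
    ultimately show ?thesis
      by (auto simp: a_r_coset_def')
  qed
  moreover have "a \<odot>\<^bsub>E\<^esub> x \<in> (\<Union>b\<in>I +> a. \<Union>y\<in>N +>\<^bsub>E\<^esub> x. {b \<odot>\<^bsub>E\<^esub> y})"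
    using I.a_rcos_self[OF a] N.a_rcos_self[OF x] by blast
  ultimately show ?thesis
    unfolding quot_smult_def using a x by (intro N.set_add_eq_a_rcos) auto
qed

lemma module_quot_module: "module (R Quot I) (quot_module R E N)"
proof -
  note hom = I.rcos_ring_hom
  have rep_R: "\<exists>a\<in>carrier R. A = I +> a" if "A \<in> carrier (R Quot I)" for A
    using that by (auto simp: FactRing_def elim: a_rcosetsE)
  have rep_E: "\<exists>x\<in>carrier E. X = N +>\<^bsub>E\<^esub> x" if "X \<in> carrier (quot_module R E N)" for X
    using that by (auto elim: a_rcosetsE)
  show ?thesis
  proof (rule moduleI)
    show "cring (R Quot I)"
      by (rule I.quotient_is_cring[OF is_cring])
    show "abelian_group (quot_module R E N)"
      by (rule abelian_group_quot_module[OF N.is_abelian_subgroup])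
  next
    fix A X assume "A \<in> carrier (R Quot I)" "X \<in> carrier (quot_module R E N)"
    then obtain a x where "a \<in> carrier R" "x \<in> carrier E" "A = I +> a" "X = N +>\<^bsub>E\<^esub> x"
      using rep_R rep_E by metis
    then show "A \<odot>\<^bsub>quot_module R E N\<^esub> X \<in> carrier (quot_module R E N)"
      using N.a_subset by (simp add: quot_smult_rcos a_rcosetsI)
  next
    fix A B X
    assume "A \<in> carrier (R Quot I)" "B \<in> carrier (R Quot I)" "X \<in> carrier (quot_module R E N)"
    then obtain a b x where "a \<in> carrier R" "b \<in> carrier R" "x \<in> carrier E"
      "A = I +> a" "B = I +> b" "X = N +>\<^bsub>E\<^esub> x"
      using rep_R rep_E by metis
    then show "(A \<oplus>\<^bsub>R Quot I\<^esub> B) \<odot>\<^bsub>quot_module R E N\<^esub> X =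
        A \<odot>\<^bsub>quot_module R E N\<^esub> X \<oplus>\<^bsub>quot_module R E N\<^esub> B \<odot>\<^bsub>quot_module R E N\<^esub> X"
      by (simp add: ring_hom_add[OF hom, symmetric] quot_smult_rcos N.a_rcos_sum smult_l_distr)
  next
    fix A X Y
    assume "A \<in> carrier (R Quot I)" "X \<in> carrier (quot_module R E N)" "Y \<in> carrier (quot_module R E N)"
    then obtain a x y where "a \<in> carrier R" "x \<in> carrier E" "y \<in> carrier E"
      "A = I +> a" "X = N +>\<^bsub>E\<^esub> x" "Y = N +>\<^bsub>E\<^esub> y"
      using rep_R rep_E by metis
    then show "A \<odot>\<^bsub>quot_module R E N\<^esub> (X \<oplus>\<^bsub>quot_module R E N\<^esub> Y) =
        A \<odot>\<^bsub>quot_module R E N\<^esub> X \<oplus>\<^bsub>quot_module R E N\<^esub> A \<odot>\<^bsub>quot_module R E N\<^esub> Y"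
      by (simp add: quot_smult_rcos N.a_rcos_sum smult_r_distr)
  next
    fix A B X
    assume "A \<in> carrier (R Quot I)" "B \<in> carrier (R Quot I)" "X \<in> carrier (quot_module R E N)"
    then obtain a b x where "a \<in> carrier R" "b \<in> carrier R" "x \<in> carrier E"
      "A = I +> a" "B = I +> b" "X = N +>\<^bsub>E\<^esub> x"
      using rep_R rep_E by metis
    then show "(A \<otimes>\<^bsub>R Quot I\<^esub> B) \<odot>\<^bsub>quot_module R E N\<^esub> X =
        A \<odot>\<^bsub>quot_module R E N\<^esub> (B \<odot>\<^bsub>quot_module R E N\<^esub> X)"
      by (simp add: ring_hom_mult[OF hom, symmetric] quot_smult_rcos smult_assoc1)
  next
    fix X assume "X \<in> carrier (quot_module R E N)"
    then obtain x where "x \<in> carrier E" "X = N +>\<^bsub>E\<^esub> x"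
      using rep_E by metis
    then show "\<one>\<^bsub>R Quot I\<^esub> \<odot>\<^bsub>quot_module R E N\<^esub> X = X"
      by (simp add: ring_hom_one[OF hom, symmetric] quot_smult_rcos)
  qed
qed

(* Baer's criterion for E/N over R/I in terms of representatives: x lifts a linear map from
   an ideal J/I of R/I to E/N. *)
lemma baer_injective_quot_moduleI:
  assumes lift: "\<And>J x. \<lbrakk>ideal J R; \<And>a. a \<in> J \<Longrightarrow> x a \<in> carrier E;
      \<And>a b. \<lbrakk>a \<in> J; b \<in> carrier R\<rbrakk> \<Longrightarrow> b \<odot>\<^bsub>E\<^esub> x a \<ominus>\<^bsub>E\<^esub> x (b \<otimes> a) \<in> N;
      \<And>a. a \<in> I \<Longrightarrow> x a \<in> N\<rbrakk> \<Longrightarrow> \<exists>e\<in>carrier E. \<forall>a\<in>J. a \<odot>\<^bsub>E\<^esub> e \<ominus>\<^bsub>E\<^esub> x a \<in> N"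
  shows "baer_injective (R Quot I) (quot_module R E N)"
  unfolding baer_injective_def
proof (intro allI impI, elim conjE)
  fix J' f
  assume J': "ideal J' (R Quot I)" and f: "lin_on (R Quot I) (self_module (R Quot I)) J' (quot_module R E N) f"
  note hom = I.rcos_ring_hom
  interpret J': ideal J' "R Quot I" by fact
  interpret Q: cring "R Quot I" by (rule I.quotient_is_cring[OF is_cring])
  have I_J': "I \<in> J'"
    using additive_subgroup.zero_closed[OF ideal.axioms(1)[OF J']] by (simp add: FactRing_def)
  then have f_zero: "f I = N"
    using lin_on_zero[OF Q.module_self_module module_quot_module f] by (simp add: FactRing_def)
  define J where "J = {a \<in> carrier R. I +> a \<in> J'}"
  have J: "ideal J R"
    unfolding J_def by (rule ring_hom_ring.ideal_vimage[OF I.rcos_ring_hom_ring J'])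
  have I_J: "I \<subseteq> J"
    using I_J' I.a_subset by (auto simp: J_def I.a_rcos_const)
  have "\<forall>a\<in>J. \<exists>y. y \<in> carrier E \<and> f (I +> a) = N +>\<^bsub>E\<^esub> y"
    using f by (auto simp: J_def lin_on_def elim!: a_rcosetsE)
  then obtain x where x: "\<And>a. a \<in> J \<Longrightarrow> x a \<in> carrier E" "\<And>a. a \<in> J \<Longrightarrow> f (I +> a) = N +>\<^bsub>E\<^esub> x a"
    by metis
  have x_smult: "b \<odot>\<^bsub>E\<^esub> x a \<ominus>\<^bsub>E\<^esub> x (b \<otimes> a) \<in> N" if a: "a \<in> J" and b: "b \<in> carrier R" for a b
  proof -
    have "b \<otimes> a \<in> J"
      using ideal.I_l_closed[OF J a b] .
    moreover have "I +> b \<in> carrier (R Quot I)" "a \<in> carrier R" "I +> a \<in> J'"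
      using a b ring_hom_closed[OF hom] by (auto simp: J_def)
    ultimately have "N +>\<^bsub>E\<^esub> x (b \<otimes> a) = f ((I +> b) \<otimes>\<^bsub>R Quot I\<^esub> (I +> a))"
      by (simp add: ring_hom_mult[OF hom b \<open>a \<in> carrier R\<close>, symmetric] x(2))
    also have "\<dots> = quot_smult E N (I +> b) (N +>\<^bsub>E\<^esub> x a)"
      using f \<open>I +> b \<in> _\<close> \<open>I +> a \<in> J'\<close> x(2)[OF a] unfolding lin_on_def by simp
    also have "\<dots> = N +>\<^bsub>E\<^esub> (b \<odot>\<^bsub>E\<^esub> x a)"
      using quot_smult_rcos b x(1)[OF a] .
    finally have "N +>\<^bsub>E\<^esub> (b \<odot>\<^bsub>E\<^esub> x a) = N +>\<^bsub>E\<^esub> x (b \<otimes> a)"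
      by (rule sym)
    then show ?thesis
      using a b x \<open>b \<otimes> a \<in> J\<close> N.a_rcos_eq_iff by simp
  qed
  have x_I: "x a \<in> N" if "a \<in> I" for a
  proof -
    have "a \<in> J" using that I_J by blast
    then have "N +>\<^bsub>E\<^esub> x a = N"
      using x(2)[OF \<open>a \<in> J\<close>] f_zero I.a_rcos_const[OF that] by simp
    then show ?thesis
      using N.a_rcos_self x(1)[OF \<open>a \<in> J\<close>] by blast
  qed
  obtain e where e: "e \<in> carrier E" "\<And>a. a \<in> J \<Longrightarrow> a \<odot>\<^bsub>E\<^esub> e \<ominus>\<^bsub>E\<^esub> x a \<in> N"
    using lift[OF J x(1) x_smult x_I] by blast
  show "\<exists>e'\<in>carrier (quot_module R E N). \<forall>k\<in>J'. f k = k \<odot>\<^bsub>quot_module R E N\<^esub> e'"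
  proof (intro bexI ballI)
    show "N +>\<^bsub>E\<^esub> e \<in> carrier (quot_module R E N)"
      using e N.a_subset by (simp add: a_rcosetsI)
    fix k assume "k \<in> J'"
    then obtain a where a: "a \<in> carrier R" "k = I +> a"
      using J'.a_subset by (auto simp: FactRing_def elim: a_rcosetsE)
    then have "a \<in> J"
      using \<open>k \<in> J'\<close> by (simp add: J_def)
    then have "N +>\<^bsub>E\<^esub> (a \<odot>\<^bsub>E\<^esub> e) = N +>\<^bsub>E\<^esub> x a"
      using N.a_rcos_eq_iff e a x(1) by simp
    then show "f k = k \<odot>\<^bsub>quot_module R E N\<^esub> (N +>\<^bsub>E\<^esub> e)"
      using x(2)[OF \<open>a \<in> J\<close>] a e(1) by (simp add: quot_smult_rcos)
  qed
qed

end

lemma smult_sub_submodule: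
  assumes "module R E" "r \<in> carrier R"
  shows "submodule (smult_sub E r) R E"
proof -
  interpret module R E by fact
  show ?thesis
  proof (rule submoduleI)
    show "smult_sub E r \<subseteq> carrier E" "\<zero>\<^bsub>E\<^esub> \<in> smult_sub E r"
      using assms(2) by (auto simp: smult_sub_def intro!: exI[of _ "\<zero>\<^bsub>E\<^esub>"])
  next
    fix z assume "z \<in> smult_sub E r"
    then show "\<ominus>\<^bsub>E\<^esub> z \<in> smult_sub E r"
      using assms(2) by (auto simp: smult_sub_def smult_r_minus[symmetric])
  next
    fix z z' assume "z \<in> smult_sub E r" "z' \<in> smult_sub E r"
    then show "z \<oplus>\<^bsub>E\<^esub> z' \<in> smult_sub E r"
      using assms(2) by (auto simp: smult_sub_def smult_r_distr[symmetric])
  next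
    fix a z assume "a \<in> carrier R" "z \<in> smult_sub E r"
    then obtain y where "a \<in> carrier R" "y \<in> carrier E" "z = r \<odot>\<^bsub>E\<^esub> y"
      by (auto simp: smult_sub_def)
    then have "a \<odot>\<^bsub>E\<^esub> z = r \<odot>\<^bsub>E\<^esub> (a \<odot>\<^bsub>E\<^esub> y)"
      using assms(2) by (simp add: smult_assoc1[symmetric] m_comm)
    then show "a \<odot>\<^bsub>E\<^esub> z \<in> smult_sub E r"
      using \<open>a \<in> carrier R\<close> \<open>y \<in> carrier E\<close> by (auto simp: smult_sub_def)
  qed
qed

lemma module_quotient_smult_sub:
  fixes R (structure)
  assumes "module R E" "r \<in> carrier R"
  shows "module_quotient R E (PIdl r) (smult_sub E r)"
proof -
  interpret module R E by fact
  have "i \<odot>\<^bsub>E\<^esub> x \<in> smult_sub E r" if "i \<in> PIdl r" "x \<in> carrier E" for i x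
  proof -
    obtain t where "t \<in> carrier R" "i = r \<otimes> t"
      using \<open>i \<in> PIdl r\<close> assms(2) m_comm by (auto simp: cgenideal_def)
    then have "i \<odot>\<^bsub>E\<^esub> x = r \<odot>\<^bsub>E\<^esub> (t \<odot>\<^bsub>E\<^esub> x)"
      using that assms(2) by (simp add: smult_assoc1)
    then show ?thesis
      using \<open>t \<in> carrier R\<close> that(2) by (auto simp: smult_sub_def)
  qed
  then show ?thesis
    using assms cgenideal_ideal smult_sub_submodule
    by (auto intro!: module_quotient.intro module_quotient_axioms.intro)
qed

section \<open>Divisibility in Baer-injective modules\<close>

definition annihilator :: "('a, 'm) ring_scheme \<Rightarrow> 'a \<Rightarrow> 'a set" where
  "annihilator R r = {c \<in> carrier R. c \<otimes>\<^bsub>R\<^esub> r = \<zero>\<^bsub>R\<^esub>}"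

lemma (in cring) ideal_annihilator:
  assumes "r \<in> carrier R"
  shows "ideal (annihilator R r) R"
  using assms by (intro cring_idealI) (auto simp: annihilator_def l_distr m_assoc)

lemma annihilator_smult_sub:
  assumes "module R E" "r \<in> carrier R" "c \<in> annihilator R r" "z \<in> smult_sub E r"
  shows "c \<odot>\<^bsub>E\<^esub> z = \<zero>\<^bsub>E\<^esub>"
proof -
  interpret module R E by fact
  show ?thesis
    using assms(2-4) by (auto simp: annihilator_def smult_sub_def smult_assoc1[symmetric])
qed

lemma baer_injective_divisible:
  fixes R (structure)
  assumes E: "module R E" "baer_injective R E" and r: "r \<in> carrier R" and z: "z \<in> carrier E"
    and ann: "\<And>c. c \<in> annihilator R r \<Longrightarrow> c \<odot>\<^bsub>E\<^esub> z = \<zero>\<^bsub>E\<^esub>"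
  shows "z \<in> smult_sub E r"
proof -
  interpret module R E by fact
  define G where "G = {(t \<otimes> r, t \<odot>\<^bsub>E\<^esub> z) | t. t \<in> carrier R}"
  have "lin_graph R (self_module R) E G"
  proof (rule lin_graphI[OF module_self_module E(1)])
    show "G \<subseteq> carrier (self_module R) \<times> carrier E"
      using r z by (auto simp: G_def)
  next
    fix k y k' y' assume "(k, y) \<in> G" "(k', y') \<in> G"
    then obtain t t' where "t \<in> carrier R" "t' \<in> carrier R"
      "(k, y) = (t \<otimes> r, t \<odot>\<^bsub>E\<^esub> z)" "(k', y') = (t' \<otimes> r, t' \<odot>\<^bsub>E\<^esub> z)"
      by (auto simp: G_def)
    then show "(k \<oplus>\<^bsub>self_module R\<^esub> k', y \<oplus>\<^bsub>E\<^esub> y') \<in> G"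
      using r z by (auto simp: G_def l_distr smult_l_distr intro!: exI[of _ "t \<oplus> t'"])
  next
    fix s k y assume "s \<in> carrier R" "(k, y) \<in> G"
    then obtain t where "t \<in> carrier R" "(k, y) = (t \<otimes> r, t \<odot>\<^bsub>E\<^esub> z)"
      by (auto simp: G_def)
    then show "(s \<odot>\<^bsub>self_module R\<^esub> k, s \<odot>\<^bsub>E\<^esub> y) \<in> G"
      using \<open>s \<in> carrier R\<close> r z
      by (auto simp: G_def m_assoc smult_assoc1 intro!: exI[of _ "s \<otimes> t"])
  next
    fix y assume "(\<zero>\<^bsub>self_module R\<^esub>, y) \<in> G"
    then show "y = \<zero>\<^bsub>E\<^esub>"
      using ann by (auto simp: G_def annihilator_def)
  qed
  moreover have "(\<one> \<otimes> r, \<one> \<odot>\<^bsub>E\<^esub> z) \<in> G"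
    by (auto simp: G_def)
  ultimately obtain e where "e \<in> carrier E" "\<one> \<odot>\<^bsub>E\<^esub> z = (\<one> \<otimes> r) \<odot>\<^bsub>E\<^esub> e"
    using baer_injective_graph[OF E] by blast
  then show ?thesis
    using r z by (auto simp: smult_sub_def)
qed

section \<open>Valuation rings\<close>

lemma valuation_ring_dvd_total:
  fixes R (structure)
  assumes "valuation_ring R" "a \<in> carrier R" "b \<in> carrier R"
  shows "(\<exists>d\<in>carrier R. a = d \<otimes> b) \<or> (\<exists>d\<in>carrier R. b = d \<otimes> a)"
proof -
  interpret cring R using assms(1) by (simp add: valuation_ring_def)
  have "PIdl a \<subseteq> PIdl b \<or> PIdl b \<subseteq> PIdl a"
    using assms cgenideal_ideal unfolding valuation_ring_def by blast
  moreover have "a \<in> PIdl a" "b \<in> PIdl b"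
    using assms cgenideal_self by auto
  ultimately show ?thesis
    unfolding cgenideal_def by blast
qed

locale linear_mod_smult_sub = module R E for R (structure) and E +
  fixes r and J and x
  assumes valuation: "valuation_ring R" and baer: "baer_injective R E"
    and r: "r \<in> carrier R" and J: "ideal J R"
    and x_closed: "a \<in> J \<Longrightarrow> x a \<in> carrier E"
    and x_smult: "\<lbrakk>a \<in> J; b \<in> carrier R\<rbrakk> \<Longrightarrow> b \<odot>\<^bsub>E\<^esub> x a \<ominus>\<^bsub>E\<^esub> x (b \<otimes> a) \<in> smult_sub E r"
    and x_PIdl: "a \<in> PIdl r \<Longrightarrow> x a \<in> smult_sub E r"

sublocale linear_mod_smult_sub \<subseteq> module_quotient R E "PIdl r" "smult_sub E r"
  by (rule module_quotient_smult_sub[OF _ r]) unfold_locales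

context linear_mod_smult_sub
begin

interpretation J: ideal J R
  by (rule J)

interpretation Ann: ideal "annihilator R r" R
  by (rule ideal_annihilator[OF r])

lemma smult_x_in_smult_sub:
  assumes "a \<in> J" "b \<in> carrier R" "b \<otimes> a \<in> PIdl r"
  shows "b \<odot>\<^bsub>E\<^esub> x a \<in> smult_sub E r"
proof -
  have "(b \<odot>\<^bsub>E\<^esub> x a \<ominus>\<^bsub>E\<^esub> x (b \<otimes> a)) \<oplus>\<^bsub>E\<^esub> x (b \<otimes> a) \<in> smult_sub E r"
    using x_smult[OF assms(1,2)] x_PIdl[OF assms(3)] by simp
  then show ?thesis
    using assms x_closed J.I_l_closed by (simp add: minus_eq a_assoc l_neg)
qed

lemma ann_smult_x_eq_zero:
  assumes a: "a \<in> J" and b: "b \<in> annihilator R r" and ba: "b \<otimes> a = \<zero>"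
  shows "b \<odot>\<^bsub>E\<^esub> x a = \<zero>\<^bsub>E\<^esub>"
proof -
  have ac: "a \<in> carrier R" and bc: "b \<in> carrier R"
    using J.Icarr[OF a] Ann.Icarr[OF b] .
  consider (a_rR) d where "d \<in> carrier R" "a = d \<otimes> r" | (r_aR) s where "s \<in> carrier R" "r = s \<otimes> a"
    using valuation_ring_dvd_total[OF valuation ac r] by blast
  then show ?thesis
  proof cases
    case a_rR
    then have "a \<in> PIdl r"
      unfolding cgenideal_def by blast
    then show ?thesis
      using annihilator_smult_sub[OF module_axioms r b x_PIdl] by blast
  next
    case r_aR
    then have "s \<otimes> a \<in> PIdl r"
      using cgenideal_self[OF r] by simp
    then obtain y where y: "y \<in> carrier E" "s \<odot>\<^bsub>E\<^esub> x a = r \<odot>\<^bsub>E\<^esub> y"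
      using smult_x_in_smult_sub[OF a r_aR(1)] unfolding smult_sub_def by blast
    consider (b_sR) c where "c \<in> carrier R" "b = c \<otimes> s" | (s_bR) c where "c \<in> carrier R" "s = c \<otimes> b"
      using valuation_ring_dvd_total[OF valuation bc r_aR(1)] by blast
    then show ?thesis
    proof cases
      case b_sR
      then have "b \<odot>\<^bsub>E\<^esub> x a = c \<odot>\<^bsub>E\<^esub> ((s \<otimes> a) \<odot>\<^bsub>E\<^esub> y)"
        using r_aR y x_closed[OF a] by (simp add: smult_assoc1)
      also have "\<dots> = (b \<otimes> a) \<odot>\<^bsub>E\<^esub> y"
        using b_sR r_aR ac y by (simp add: smult_assoc1 m_assoc)
      finally show ?thesis
        using ba y by simp
    next
      case s_bR
      have "r = (c \<otimes> b) \<otimes> a"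
        using r_aR(2) unfolding s_bR(2) .
      also have "\<dots> = c \<otimes> (b \<otimes> a)"
        using s_bR(1) bc ac by (rule m_assoc)
      finally have "r = \<zero>"
        using ba s_bR(1) by simp
      have "b \<otimes> a \<in> PIdl r"
        using ba I.zero_closed by simp
      then obtain y where "y \<in> carrier E" "b \<odot>\<^bsub>E\<^esub> x a = r \<odot>\<^bsub>E\<^esub> y"
        using smult_x_in_smult_sub[OF a bc] unfolding smult_sub_def by blast
      then show ?thesis
        using \<open>r = \<zero>\<close> by simp
    qed
  qed
qed

lemma ann_smult_x_mult:
  assumes a: "a \<in> J" and d: "d \<in> carrier R" and c: "c \<in> annihilator R r"
  shows "c \<odot>\<^bsub>E\<^esub> x (d \<otimes> a) = c \<odot>\<^bsub>E\<^esub> (d \<odot>\<^bsub>E\<^esub> x a)"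
proof -
  have cc: "c \<in> carrier R" and da: "d \<otimes> a \<in> J"
    using c Ann.Icarr J.I_l_closed a d by auto
  have "c \<odot>\<^bsub>E\<^esub> (d \<odot>\<^bsub>E\<^esub> x a \<ominus>\<^bsub>E\<^esub> x (d \<otimes> a)) = \<zero>\<^bsub>E\<^esub>"
    using annihilator_smult_sub[OF module_axioms r c x_smult[OF a d]] .
  then have "c \<odot>\<^bsub>E\<^esub> (d \<odot>\<^bsub>E\<^esub> x a) \<ominus>\<^bsub>E\<^esub> c \<odot>\<^bsub>E\<^esub> x (d \<otimes> a) = \<zero>\<^bsub>E\<^esub>"
    using cc d x_closed[OF a] x_closed[OF da] by (simp add: minus_eq smult_r_distr smult_r_minus)
  then show ?thesis
    using cc d x_closed[OF a] x_closed[OF da] minus_eq_zero_iff by simp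
qed

definition ann_graph where
  "ann_graph = {(c \<otimes> a, c \<odot>\<^bsub>E\<^esub> x a) | c a. c \<in> annihilator R r \<and> a \<in> J}"

lemma ann_graph_add_multiple:
  assumes a: "a \<in> J" and d: "d \<in> carrier R"
    and c: "c \<in> annihilator R r" and c': "c' \<in> annihilator R r"
  shows "(c \<otimes> a \<oplus> c' \<otimes> (d \<otimes> a), c \<odot>\<^bsub>E\<^esub> x a \<oplus>\<^bsub>E\<^esub> c' \<odot>\<^bsub>E\<^esub> x (d \<otimes> a)) \<in> ann_graph"
proof -
  have ac: "a \<in> carrier R" and cc: "c \<in> carrier R" and c'c: "c' \<in> carrier R"
    using J.Icarr[OF a] Ann.Icarr[OF c] Ann.Icarr[OF c'] .
  have "c \<oplus> c' \<otimes> d \<in> annihilator R r"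
    using c Ann.I_r_closed[OF c' d] by simp
  moreover have "c \<otimes> a \<oplus> c' \<otimes> (d \<otimes> a) = (c \<oplus> c' \<otimes> d) \<otimes> a"
    using ac cc c'c d by algebra
  moreover have "c \<odot>\<^bsub>E\<^esub> x a \<oplus>\<^bsub>E\<^esub> c' \<odot>\<^bsub>E\<^esub> x (d \<otimes> a) = (c \<oplus> c' \<otimes> d) \<odot>\<^bsub>E\<^esub> x a"
    using ann_smult_x_mult[OF a d c'] cc c'c d x_closed[OF a] by (simp add: smult_l_distr smult_assoc1)
  ultimately show ?thesis
    unfolding ann_graph_def using a by blast
qed

lemma lin_graph_ann_graph: "lin_graph R (self_module R) E ann_graph"
proof (rule lin_graphI[OF module_self_module module_axioms])
  show "ann_graph \<subseteq> carrier (self_module R) \<times> carrier E"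
    using J.Icarr Ann.Icarr x_closed by (auto simp: ann_graph_def)
next
  fix k y k' y' assume "(k, y) \<in> ann_graph" "(k', y') \<in> ann_graph"
  then obtain c a c' a' where
    ca: "c \<in> annihilator R r" "a \<in> J" "k = c \<otimes> a" "y = c \<odot>\<^bsub>E\<^esub> x a" and
    ca': "c' \<in> annihilator R r" "a' \<in> J" "k' = c' \<otimes> a'" "y' = c' \<odot>\<^bsub>E\<^esub> x a'"
    unfolding ann_graph_def by blast
  consider d where "d \<in> carrier R" "a' = d \<otimes> a" | d where "d \<in> carrier R" "a = d \<otimes> a'"
    using valuation_ring_dvd_total[OF valuation J.Icarr[OF ca'(2)] J.Icarr[OF ca(2)]] by blast
  then show "(k \<oplus>\<^bsub>self_module R\<^esub> k', y \<oplus>\<^bsub>E\<^esub> y') \<in> ann_graph"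
  proof cases
    case 1
    show ?thesis
      using ann_graph_add_multiple[OF ca(2) 1(1) ca(1) ca'(1)]
      unfolding ca(3,4) ca'(3,4) 1(2) self_module_simps .
  next
    case 2
    have "k \<in> carrier R" "k' \<in> carrier R" "y \<in> carrier E" "y' \<in> carrier E"
      using ca ca' J.Icarr Ann.Icarr x_closed by auto
    then have "k \<oplus> k' = k' \<oplus> k" "y \<oplus>\<^bsub>E\<^esub> y' = y' \<oplus>\<^bsub>E\<^esub> y"
      using R.a_comm M.a_comm by blast+
    then show ?thesis
      using ann_graph_add_multiple[OF ca'(2) 2(1) ca'(1) ca(1)]
      unfolding ca(3,4) ca'(3,4) 2(2) self_module_simps by simp
  qed
next
  fix t k y assume t: "t \<in> carrier R" and "(k, y) \<in> ann_graph"
  then obtain c a where ca: "c \<in> annihilator R r" "a \<in> J" "k = c \<otimes> a" "y = c \<odot>\<^bsub>E\<^esub> x a"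
    unfolding ann_graph_def by blast
  then have "t \<otimes> k = (t \<otimes> c) \<otimes> a" "t \<odot>\<^bsub>E\<^esub> y = (t \<otimes> c) \<odot>\<^bsub>E\<^esub> x a"
    using t J.Icarr Ann.Icarr x_closed by (simp_all add: m_assoc smult_assoc1)
  moreover have "t \<otimes> c \<in> annihilator R r"
    using Ann.I_l_closed[OF ca(1) t] .
  ultimately show "(t \<odot>\<^bsub>self_module R\<^esub> k, t \<odot>\<^bsub>E\<^esub> y) \<in> ann_graph"
    unfolding ann_graph_def using ca(2) by auto
next
  fix y assume "(\<zero>\<^bsub>self_module R\<^esub>, y) \<in> ann_graph"
  then show "y = \<zero>\<^bsub>E\<^esub>"
    using ann_smult_x_eq_zero unfolding ann_graph_def by auto
qed

theorem approximating_element_exists: "\<exists>e\<in>carrier E. \<forall>a\<in>J. a \<odot>\<^bsub>E\<^esub> e \<ominus>\<^bsub>E\<^esub> x a \<in> smult_sub E r"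
proof -
  have "(\<zero> \<otimes> \<zero>, \<zero> \<odot>\<^bsub>E\<^esub> x \<zero>) \<in> ann_graph"
    unfolding ann_graph_def using Ann.zero_closed J.zero_closed by blast
  then obtain e where e: "e \<in> carrier E" and e_graph: "\<forall>k y. (k, y) \<in> ann_graph \<longrightarrow> y = k \<odot>\<^bsub>E\<^esub> e"
    using baer_injective_graph[OF module_axioms baer lin_graph_ann_graph] by blast
  show ?thesis
  proof (intro bexI[OF _ e] ballI)
    fix a assume a: "a \<in> J"
    show "a \<odot>\<^bsub>E\<^esub> e \<ominus>\<^bsub>E\<^esub> x a \<in> smult_sub E r"
    proof (rule baer_injective_divisible[OF module_axioms baer r])
      show "a \<odot>\<^bsub>E\<^esub> e \<ominus>\<^bsub>E\<^esub> x a \<in> carrier E"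
        using J.Icarr[OF a] e x_closed[OF a] by (simp add: minus_eq)
    next
      fix c assume c: "c \<in> annihilator R r"
      then have "c \<odot>\<^bsub>E\<^esub> x a = (c \<otimes> a) \<odot>\<^bsub>E\<^esub> e"
        using e_graph a unfolding ann_graph_def by blast
      then show "c \<odot>\<^bsub>E\<^esub> (a \<odot>\<^bsub>E\<^esub> e \<ominus>\<^bsub>E\<^esub> x a) = \<zero>\<^bsub>E\<^esub>"
        using Ann.Icarr[OF c] J.Icarr[OF a] e x_closed[OF a]
        by (simp add: minus_eq smult_r_distr smult_r_minus smult_assoc1 M.r_neg)
    qed
  qed
qed

end

lemma baer_injective_quot_smult_sub:
  fixes R (structure)
  assumes "valuation_ring R" "module R E" "baer_injective R E" "r \<in> carrier R"
  shows "baer_injective (R Quot PIdl r) (quot_module R E (smult_sub E r))"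
proof -
  interpret module_quotient R E "PIdl r" "smult_sub E r"
    by (rule module_quotient_smult_sub[OF assms(2,4)])
  show ?thesis
  proof (rule baer_injective_quot_moduleI)
    fix J x
    assume "ideal J R" "\<And>a. a \<in> J \<Longrightarrow> x a \<in> carrier E"
      "\<And>a b. \<lbrakk>a \<in> J; b \<in> carrier R\<rbrakk> \<Longrightarrow> b \<odot>\<^bsub>E\<^esub> x a \<ominus>\<^bsub>E\<^esub> x (b \<otimes> a) \<in> smult_sub E r"
      "\<And>a. a \<in> PIdl r \<Longrightarrow> x a \<in> smult_sub E r"
    then interpret linear_mod_smult_sub R E r J x
      using assms by (intro linear_mod_smult_sub.intro linear_mod_smult_sub_axioms.intro) blast+
    show "\<exists>e\<in>carrier E. \<forall>a\<in>J. a \<odot>\<^bsub>E\<^esub> e \<ominus>\<^bsub>E\<^esub> x a \<in> smult_sub E r"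
      by (rule approximating_element_exists)
  qed
qed

theorem mainTheorem3:
  fixes R :: "('a, 'm) ring_scheme"
    and E :: "('a, 'b, 'n) module_scheme"
    and P :: "'a set"
    and r :: 'a
  assumes "valuation_ring R"
    and "maximalideal P R"
    and "injective_module R E TYPE('a)"
    and "r \<in> P"
  shows "injective_module (R Quot (PIdl\<^bsub>R\<^esub> r)) (quot_module R E (smult_sub E r)) TYPE('c)"
proof -
  have r: "r \<in> carrier R"
    using ideal.Icarr[OF maximalideal.axioms(1)[OF assms(2)] assms(4)] .
  have E: "module R E"
    using assms(3) by (simp add: injective_module_def)
  have "baer_injective R E"
    using injective_module_imp_baer_injective[OF assms(3)] .
  then have "baer_injective (R Quot PIdl\<^bsub>R\<^esub> r) (quot_module R E (smult_sub E r))"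
    by (rule baer_injective_quot_smult_sub[OF assms(1) E _ r])
  moreover have "module (R Quot PIdl\<^bsub>R\<^esub> r) (quot_module R E (smult_sub E r))"
    using module_quotient.module_quot_module[OF module_quotient_smult_sub[OF E r]] .
  ultimately show ?thesis
    by (intro baer_injective_imp_injective_module)
qed

end
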